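(* For every positive integer $n$, the number $J_n$ of vectors $(\delta_0,\ldots,\delta_n)\in\{-1,1\}^{n+1}$ with $\sum_{i=0}^n\delta_i\binom{n}{i}=0$ equals the number $x_n$ of arrays $(a_0,\ldots,a_n)\in\{0,1\}^{n+1}$ whose $n$-th difference is zero, i.e. with $\sum_{t=0}^n\binom{n}{t}(-1)^t a_{n-t}=0$.
   Context: For a list $L=[a_0,\ldots,a_n]$ the first difference is $\Delta(L)=[a_1-a_0,\ldots,a_n-a_{n-1}]$ and $\Delta^k=\Delta(\Delta^{k-1})$; the $n$-th difference of a list of $n+1$ elements is the single number $\sum_{t=0}^n\binom{n}{t}(-1)^ta_{n-t}$. *)

theory Defs
  imports Main
begin

definition J :: "nat \<Rightarrow> nat" where
  "J n = card {d :: int list. length d = n + 1 \<and> set d \<subseteq> {-1, 1} \<and>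
      (\<Sum>i=0..n. d ! i * int (n choose i)) = 0}"

definition x :: "nat \<Rightarrow> nat" where
  "x n = card {a :: int list. length a = n + 1 \<and> set a \<subseteq> {0, 1} \<and>
      (\<Sum>t=0..n. int (n choose t) * (-1) ^ t * a ! (n - t)) = 0}"

end

theory Submission
  imports Defs
begin

text \<open>After reversing the array, the substitution \<open>d\<^sub>i = (-1)\<^sup>i (2 b\<^sub>i - 1)\<close> maps 0/1 arrays
  bijectively onto sign vectors, and turns \<open>\<Sum> d\<^sub>i C(n,i)\<close> into twice the alternating sum
  \<open>\<Sum> (-1)\<^sup>i C(n,i) b\<^sub>i\<close> minus \<open>\<Sum> (-1)\<^sup>i C(n,i)\<close>, and the latter vanishes for \<open>n \<ge> 1\<close>.\<close>

lemma bij_betw_map_nth: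
  assumes bij: "\<And>i. i < m \<Longrightarrow> bij_betw (f i) A B"
  shows "bij_betw (\<lambda>l. map (\<lambda>i. f i (l ! i)) [0..<m])
           {l. length l = m \<and> set l \<subseteq> A} {l. length l = m \<and> set l \<subseteq> B}"
proof (rule bij_betw_byWitness[where f' = "\<lambda>l. map (\<lambda>i. inv_into A (f i) (l ! i)) [0..<m]"])
  have in_set: "set l \<subseteq> C \<longleftrightarrow> (\<forall>i < length l. l ! i \<in> C)" for l :: "'c list" and C
    by (auto simp: set_conv_nth)
  show "\<forall>l\<in>{l. length l = m \<and> set l \<subseteq> A}.
          map (\<lambda>i. inv_into A (f i) (map (\<lambda>i. f i (l ! i)) [0..<m] ! i)) [0..<m] = l"
    using bij bij_betw_inv_into_left by (fastforce intro!: nth_equalityI simp: in_set)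
  show "\<forall>l\<in>{l. length l = m \<and> set l \<subseteq> B}.
          map (\<lambda>i. f i (map (\<lambda>i. inv_into A (f i) (l ! i)) [0..<m] ! i)) [0..<m] = l"
    using bij bij_betw_inv_into_right by (fastforce intro!: nth_equalityI simp: in_set)
  show "(\<lambda>l. map (\<lambda>i. f i (l ! i)) [0..<m]) ` {l. length l = m \<and> set l \<subseteq> A}
          \<subseteq> {l. length l = m \<and> set l \<subseteq> B}"
    using bij bij_betw_apply by (fastforce simp: in_set)
  show "(\<lambda>l. map (\<lambda>i. inv_into A (f i) (l ! i)) [0..<m]) ` {l. length l = m \<and> set l \<subseteq> B}
          \<subseteq> {l. length l = m \<and> set l \<subseteq> A}"
    using bij bij_betw_apply bij_betw_inv_into by (fastforce simp: in_set)
qed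

lemma card_lists_map_nth_eq:
  assumes bij: "\<And>i. i < m \<Longrightarrow> bij_betw (f i) A B"
    and transfer: "\<And>l. length l = m \<Longrightarrow> set l \<subseteq> A \<Longrightarrow> Q (map (\<lambda>i. f i (l ! i)) [0..<m]) \<longleftrightarrow> P l"
  shows "card {l. length l = m \<and> set l \<subseteq> B \<and> Q l} = card {l. length l = m \<and> set l \<subseteq> A \<and> P l}"
proof -
  let ?F = "\<lambda>l. map (\<lambda>i. f i (l ! i)) [0..<m]"
  have F: "bij_betw ?F {l. length l = m \<and> set l \<subseteq> A} {l. length l = m \<and> set l \<subseteq> B}"
    using bij by (rule bij_betw_map_nth)
  have image: "?F ` {l. length l = m \<and> set l \<subseteq> A \<and> P l} = {l. length l = m \<and> set l \<subseteq> B \<and> Q l}"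
  proof
    show "?F ` {l. length l = m \<and> set l \<subseteq> A \<and> P l} \<subseteq> {l. length l = m \<and> set l \<subseteq> B \<and> Q l}"
    proof (rule image_subsetI)
      fix l assume l: "l \<in> {l. length l = m \<and> set l \<subseteq> A \<and> P l}"
      then have "?F l \<in> {l. length l = m \<and> set l \<subseteq> B}"
        by (intro bij_betw_apply[OF F]) simp
      with l transfer show "?F l \<in> {l. length l = m \<and> set l \<subseteq> B \<and> Q l}"
        by simp
    qed
  next
    show "{l. length l = m \<and> set l \<subseteq> B \<and> Q l} \<subseteq> ?F ` {l. length l = m \<and> set l \<subseteq> A \<and> P l}"
    proof
      fix l' assume l': "l' \<in> {l. length l = m \<and> set l \<subseteq> B \<and> Q l}"
      then have "l' \<in> ?F ` {l. length l = m \<and> set l \<subseteq> A}"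
        using F by (simp add: bij_betw_def)
      then obtain l where "l \<in> {l. length l = m \<and> set l \<subseteq> A}" "l' = ?F l" ..
      then show "l' \<in> ?F ` {l. length l = m \<and> set l \<subseteq> A \<and> P l}"
        using l' transfer by auto
    qed
  qed
  have "inj_on ?F {l. length l = m \<and> set l \<subseteq> A \<and> P l}"
    using bij_betw_imp_inj_on[OF F] by (rule inj_on_subset) auto
  then show ?thesis
    unfolding image[symmetric] by (rule card_image)
qed

lemma card_lists_rev_eq:
  "card {l. length l = m \<and> set l \<subseteq> A \<and> P (rev l)} = card {l. length l = m \<and> set l \<subseteq> A \<and> P l}"
proof -
  have image: "rev ` {l. length l = m \<and> set l \<subseteq> A \<and> P (rev l)} = {l. length l = m \<and> set l \<subseteq> A \<and> P l}"
  proof (intro equalityI subsetI)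
    fix l assume "l \<in> {l. length l = m \<and> set l \<subseteq> A \<and> P l}"
    then have "rev l \<in> {l. length l = m \<and> set l \<subseteq> A \<and> P (rev l)}"
      by simp
    then show "l \<in> rev ` {l. length l = m \<and> set l \<subseteq> A \<and> P (rev l)}"
      by (rule rev_image_eqI) simp
  qed auto
  show ?thesis
    unfolding image[symmetric] by (rule card_image[symmetric]) simp
qed

lemma sum_binomial_signed_affine:
  fixes b :: "nat \<Rightarrow> int"
  assumes "n \<ge> 1"
  shows "(\<Sum>i=0..n. (-1) ^ i * (2 * b i - 1) * int (n choose i))
       = 2 * (\<Sum>i=0..n. int (n choose i) * (-1) ^ i * b i)"
proof -
  have "(\<Sum>i=0..n. (-1) ^ i * (2 * b i - 1) * int (n choose i))
      = (\<Sum>i=0..n. 2 * (int (n choose i) * (-1) ^ i * b i) - (-1) ^ i * int (n choose i))"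
    by (rule sum.cong) (simp_all add: algebra_simps)
  also have "\<dots> = 2 * (\<Sum>i=0..n. int (n choose i) * (-1) ^ i * b i)
                   - (\<Sum>i=0..n. (-1) ^ i * int (n choose i))"
    by (simp add: sum_subtractf sum_distrib_left)
  also have "(\<Sum>i=0..n. (-1) ^ i * int (n choose i)) = 0"
    using choose_alternating_sum[of n, where 'a = int] assms by (simp add: atLeast0AtMost)
  finally show ?thesis by simp
qed

lemma bij_betw_bit_to_sign:
  "bij_betw (\<lambda>s. (-1) ^ i * (2 * s - 1)) {0, 1 :: int} {-1, 1}"
  by (cases "even i") (auto simp: bij_betw_def)

lemma x_eq_card_alternating_sum_zero:
  "x n = card {b :: int list. length b = n + 1 \<and> set b \<subseteq> {0, 1} \<and>
                (\<Sum>t=0..n. int (n choose t) * (-1) ^ t * b ! t) = 0}"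
proof -
  have "(\<Sum>t=0..n. int (n choose t) * (-1) ^ t * a ! (n - t))
      = (\<Sum>t=0..n. int (n choose t) * (-1) ^ t * rev a ! t)" if "length a = n + 1" for a :: "int list"
    using that by (intro sum.cong) (simp_all add: rev_nth)
  then have "x n = card {a :: int list. length a = n + 1 \<and> set a \<subseteq> {0, 1} \<and>
                (\<Sum>t=0..n. int (n choose t) * (-1) ^ t * rev a ! t) = 0}"
    unfolding x_def by (metis (no_types, lifting))
  also have "\<dots> = card {b :: int list. length b = n + 1 \<and> set b \<subseteq> {0, 1} \<and>
                (\<Sum>t=0..n. int (n choose t) * (-1) ^ t * b ! t) = 0}"
    by (rule card_lists_rev_eq)
  finally show ?thesis .
qed

lemma J_eq_card_alternating_sum_zero:
  assumes "n \<ge> 1"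
  shows "J n = card {b :: int list. length b = n + 1 \<and> set b \<subseteq> {0, 1} \<and>
                (\<Sum>t=0..n. int (n choose t) * (-1) ^ t * b ! t) = 0}"
  unfolding J_def
proof (rule card_lists_map_nth_eq[where f = "\<lambda>i s. (-1) ^ i * (2 * s - 1)"])
  show "bij_betw (\<lambda>s. (-1) ^ i * (2 * s - 1)) {0, 1} {- 1, 1 :: int}" for i
    by (rule bij_betw_bit_to_sign)
next
  fix b :: "int list"
  have "(\<Sum>i=0..n. map (\<lambda>i. (-1) ^ i * (2 * b ! i - 1)) [0..<n + 1] ! i * int (n choose i))
      = (\<Sum>i=0..n. (-1) ^ i * (2 * b ! i - 1) * int (n choose i))"
    by (rule sum.cong) (simp_all del: upt_Suc)
  then show "(\<Sum>i=0..n. map (\<lambda>i. (-1) ^ i * (2 * b ! i - 1)) [0..<n + 1] ! i * int (n choose i)) = 0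
      \<longleftrightarrow> (\<Sum>t=0..n. int (n choose t) * (-1) ^ t * b ! t) = 0"
    using sum_binomial_signed_affine[OF assms, of "\<lambda>i. b ! i"] by linarith
qed

theorem mainTheorem4:
  fixes n :: nat
  assumes "n \<ge> 1"
  shows "J n = x n"
  using J_eq_card_alternating_sum_zero[OF assms] x_eq_card_alternating_sum_zero[of n] by simp

end
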